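(* For every simple game $v$ on $n\ge 2$ players and every player $i$ that is not a dictator in $v$, we have $\mathrm{Js}_i(v)\le\frac{2^{n-1}-1}{2^{n-1}}$.
   Context: A simple game on $N=\{1,\dots,n\}$ is a surjective, monotone map $v\colon 2^N\to\{0,1\}$. Player $j$ is a null player if $v(S)=v(S\cup\{j\})$ for all $S\subseteq N\setminus\{j\}$; player $i$ is a dictator if $v(\{i\})=1$ and all other players are null players. Johnston index: for a winning coalition $T$ (i.e. $v(T)=1$), a player $j\in T$ is critical in $T$ if $v(T\setminus\{j\})=0$; let $\psi'_j(v)=\sum_{T\ni j,\ j\text{ critical in }T}\frac{1}{c(T)}$, where $c(T)$ is the number of players critical in $T$; then $\mathrm{Js}_i(v)=\psi'_i(v)/\sum_{j\in N}\psi'_j(v)$. *)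

theory Defs
  imports Complex_Main
begin

text \<open>Players are N = {1..n}. A simple game is a map v from subsets of N to {0,1}
  (values outside Pow N are irrelevant), surjective onto {0,1} and monotone.\<close>

definition players :: "nat \<Rightarrow> nat set" where
  "players n = {1..n}"

definition simple_game :: "nat \<Rightarrow> (nat set \<Rightarrow> nat) \<Rightarrow> bool" where
  "simple_game n v \<longleftrightarrow>
     (\<forall>S. S \<subseteq> players n \<longrightarrow> v S \<in> {0, 1}) \<and>
     (\<exists>S. S \<subseteq> players n \<and> v S = 0) \<and>
     (\<exists>S. S \<subseteq> players n \<and> v S = 1) \<and>
     (\<forall>S T. S \<subseteq> T \<and> T \<subseteq> players n \<longrightarrow> v S \<le> v T)"

definition null_player :: "nat \<Rightarrow> (nat set \<Rightarrow> nat) \<Rightarrow> nat \<Rightarrow> bool" where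
  "null_player n v j \<longleftrightarrow> (\<forall>S. S \<subseteq> players n - {j} \<longrightarrow> v S = v (S \<union> {j}))"

definition dictator :: "nat \<Rightarrow> (nat set \<Rightarrow> nat) \<Rightarrow> nat \<Rightarrow> bool" where
  "dictator n v i \<longleftrightarrow> v {i} = 1 \<and> (\<forall>j \<in> players n - {i}. null_player n v j)"

definition critical :: "(nat set \<Rightarrow> nat) \<Rightarrow> nat set \<Rightarrow> nat \<Rightarrow> bool" where
  "critical v T j \<longleftrightarrow> j \<in> T \<and> v T = 1 \<and> v (T - {j}) = 0"

definition num_critical :: "(nat set \<Rightarrow> nat) \<Rightarrow> nat set \<Rightarrow> nat" where
  "num_critical v T = card {j \<in> T. critical v T j}"

definition johnston_raw :: "nat \<Rightarrow> (nat set \<Rightarrow> nat) \<Rightarrow> nat \<Rightarrow> real" where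
  "johnston_raw n v j =
     (\<Sum>T \<in> {T. T \<subseteq> players n \<and> critical v T j}. 1 / real (num_critical v T))"

definition johnston :: "nat \<Rightarrow> (nat set \<Rightarrow> nat) \<Rightarrow> nat \<Rightarrow> real" where
  "johnston n v i = johnston_raw n v i / (\<Sum>j \<in> players n. johnston_raw n v j)"

end

theory Submission
  imports Defs
begin

text \<open>Write \<open>\<psi>\<^sub>i\<close> for \<open>johnston_raw n v i\<close> and \<open>R\<close> for the sum of the raw indices of the other
  players, so that \<open>Js\<^sub>i = \<psi>\<^sub>i / (\<psi>\<^sub>i + R)\<close> and the claim is \<open>\<psi>\<^sub>i \<le> (2\<^sup>n\<^sup>-\<^sup>1 - 1) R\<close>.
  Each coalition distributes a unit among its critical players. Player \<open>i\<close> is critical only in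
  coalitions containing it, and not in all of them (else it is a dictator), so
  \<open>\<psi>\<^sub>i \<le> 2\<^sup>n\<^sup>-\<^sup>1 - 1\<close>. It therefore suffices that \<open>R \<ge> 1\<close> or \<open>\<psi>\<^sub>i \<le> R\<close>. If \<open>{i}\<close> wins, a non-null
  player \<open>j\<close> is pivotal in some coalition not containing \<open>i\<close>, which gives \<open>j\<close>'s side a full unit.
  Otherwise \<open>i\<close> is never the only critical player of a minimal winning coalition, so every
  minimal winning coalition gives the others at least one half: two of them give \<open>R \<ge> 1\<close>,
  while a unique one lies in every winning coalition and is its set of critical players, so
  that coalition by coalition \<open>i\<close> receives at most what the others receive.\<close>

definition share :: "(nat set \<Rightarrow> nat) \<Rightarrow> nat set \<Rightarrow> nat \<Rightarrow> real" where
  "share v T j = (if critical v T j then 1 / real (num_critical v T) else 0)"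

definition minimal_winning :: "(nat set \<Rightarrow> nat) \<Rightarrow> nat set \<Rightarrow> bool" where
  "minimal_winning v W \<longleftrightarrow> v W = 1 \<and> (\<forall>j\<in>W. v (W - {j}) = 0)"

lemma finite_players [simp]: "finite (players n)"
  and card_players [simp]: "card (players n) = n"
  by (simp_all add: players_def)

lemma simple_game_binary:
  "simple_game n v \<Longrightarrow> S \<subseteq> players n \<Longrightarrow> v S = 0 \<or> v S = 1"
  unfolding simple_game_def by blast

lemma simple_game_mono:
  "simple_game n v \<Longrightarrow> S \<subseteq> T \<Longrightarrow> T \<subseteq> players n \<Longrightarrow> v S \<le> v T"
  unfolding simple_game_def by blast

lemma simple_game_empty:
  assumes "simple_game n v"
  shows "v {} = 0"
proof -
  obtain S where "S \<subseteq> players n" "v S = 0"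
    using assms unfolding simple_game_def by blast
  then show ?thesis using simple_game_mono[OF assms, of "{}" S] by simp
qed

lemma simple_game_players:
  assumes "simple_game n v"
  shows "v (players n) = 1"
proof -
  obtain S where "S \<subseteq> players n" "v S = 1"
    using assms unfolding simple_game_def by blast
  then show ?thesis
    using simple_game_mono[OF assms, of S "players n"] simple_game_binary[OF assms, of "players n"]
    by auto
qed

lemma num_critical_pos:
  assumes "finite T" "critical v T k"
  shows "num_critical v T > 0"
  using assms unfolding num_critical_def critical_def by (auto simp: card_gt_0_iff)

lemma share_nonneg: "0 \<le> share v T j"
  unfolding share_def by simp

lemma share_le_one: "finite T \<Longrightarrow> share v T j \<le> (if critical v T j then 1 else 0)"
  unfolding share_def using num_critical_pos by fastforce

lemma sum_share_eq_one:
  assumes "finite N" "T \<subseteq> N" "critical v T k"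
  shows "(\<Sum>j\<in>N. share v T j) = 1"
proof -
  have fin: "finite T" using assms(1,2) finite_subset by blast
  have "(\<Sum>j\<in>N. share v T j) = (\<Sum>j\<in>{j\<in>N. critical v T j}. 1 / real (num_critical v T))"
    unfolding share_def by (rule sum.inter_filter[OF assms(1), symmetric])
  also have "{j\<in>N. critical v T j} = {j\<in>T. critical v T j}"
    using assms(2) unfolding critical_def by auto
  finally show ?thesis
    using num_critical_pos[OF fin assms(3)] by (simp add: num_critical_def)
qed

lemma share_add_sum_others:
  assumes "finite N" "T \<subseteq> N" "i \<in> N" "critical v T k"
  shows "share v T i + (\<Sum>j\<in>N - {i}. share v T j) = 1"
  using sum_share_eq_one[OF assms(1,2,4)] sum.remove[OF assms(1,3), of "share v T"] by simp

lemma share_le_half: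
  assumes "finite T" "critical v T i" "critical v T j" "j \<noteq> i"
  shows "share v T i \<le> 1 / 2"
proof -
  have "{i, j} \<subseteq> {k \<in> T. critical v T k}"
    using assms(2,3) unfolding critical_def by auto
  then have "card {i, j} \<le> num_critical v T"
    unfolding num_critical_def using assms(1) by (intro card_mono) auto
  then have "2 \<le> num_critical v T" using assms(4) by simp
  then show ?thesis
    using assms(2) unfolding share_def by (simp add: field_simps)
qed

lemma share_le_sum_others:
  assumes "finite N" "T \<subseteq> N" "i \<in> N" "{j. critical v T j} \<noteq> {i}"
  shows "share v T i \<le> (\<Sum>j\<in>N - {i}. share v T j)"
proof (cases "critical v T i")
  case True
  then obtain j where j: "critical v T j" "j \<noteq> i" using assms(4) by blast
  have "share v T i \<le> 1 / 2"
    using share_le_half[OF _ True j] assms(1,2) finite_subset by blast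
  then show ?thesis using share_add_sum_others[OF assms(1-3) True] by linarith
next
  case False
  then show ?thesis by (simp add: share_def sum_nonneg share_nonneg)
qed

lemma johnston_raw_eq_sum_share:
  "johnston_raw n v j = (\<Sum>T\<in>Pow (players n). share v T j)"
proof -
  have "{T. T \<subseteq> players n \<and> critical v T j} = {T \<in> Pow (players n). critical v T j}"
    by auto
  then show ?thesis
    unfolding johnston_raw_def share_def by (simp only:) (rule sum.inter_filter, simp)
qed

lemma sum_johnston_raw_others:
  "(\<Sum>j\<in>players n - {i}. johnston_raw n v j)
     = (\<Sum>T\<in>Pow (players n). \<Sum>j\<in>players n - {i}. share v T j)"
  unfolding johnston_raw_eq_sum_share by (rule sum.swap)

lemma sum_johnston_raw_others_ge:
  assumes "T \<subseteq> players n"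
  shows "(\<Sum>j\<in>players n - {i}. share v T j) \<le> (\<Sum>j\<in>players n - {i}. johnston_raw n v j)"
  unfolding sum_johnston_raw_others using assms
  by (intro member_le_sum) (auto intro: sum_nonneg share_nonneg)

lemma card_Pow_containing:
  assumes "finite N" "i \<in> N"
  shows "card {T \<in> Pow N. i \<in> T} = 2 ^ (card N - 1)"
proof -
  have "{T \<in> Pow N. i \<in> T} = insert i ` Pow (N - {i})"
  proof (intro equalityI subsetI)
    fix T assume "T \<in> {T \<in> Pow N. i \<in> T}"
    then have "T = insert i (T - {i})" "T - {i} \<in> Pow (N - {i})" by auto
    then show "T \<in> insert i ` Pow (N - {i})" by (rule image_eqI)
  qed (use assms(2) in auto)
  moreover have "inj_on (insert i) (Pow (N - {i}))"
    unfolding inj_on_def by blast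
  ultimately show ?thesis
    using assms by (simp add: card_image card_Pow)
qed

lemma dictatorI:
  assumes "i \<in> players n" "\<And>T. T \<subseteq> players n \<Longrightarrow> i \<in> T \<Longrightarrow> critical v T i"
  shows "dictator n v i"
proof -
  have win: "v S = (if i \<in> S then 1 else 0)" if "S \<subseteq> players n" for S
  proof (cases "i \<in> S")
    case False
    then have "insert i S - {i} = S" by auto
    then show ?thesis
      using assms that False critical_def[of v "insert i S" i] by auto
  qed (use assms that critical_def in auto)
  have "v S = v (S \<union> {j})" if "j \<in> players n - {i}" "S \<subseteq> players n - {j}" for j S
  proof -
    have "S \<subseteq> players n" "S \<union> {j} \<subseteq> players n" using that by auto
    then show ?thesis using that(1) win[of S] win[of "S \<union> {j}"] by auto
  qed
  then show ?thesis
    unfolding dictator_def null_player_def using win[of "{i}"] assms(1) by auto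
qed

lemma card_critical_coalitions_lt:
  assumes "i \<in> players n" "\<not> dictator n v i"
  shows "card {T \<in> Pow (players n). critical v T i} < 2 ^ (n - 1)"
proof -
  have sub: "{T \<in> Pow (players n). critical v T i} \<subseteq> {T \<in> Pow (players n). i \<in> T}"
    unfolding critical_def by auto
  have "{T \<in> Pow (players n). critical v T i} \<noteq> {T \<in> Pow (players n). i \<in> T}"
    using dictatorI[OF assms(1), of v] assms(2) by blast
  then have "card {T \<in> Pow (players n). critical v T i} < card {T \<in> Pow (players n). i \<in> T}"
    using sub by (intro psubset_card_mono) auto
  then show ?thesis
    using card_Pow_containing[OF finite_players assms(1)] by simp
qed

lemma johnston_raw_le_of_not_dictator:
  assumes "i \<in> players n" "\<not> dictator n v i"
  shows "johnston_raw n v i \<le> 2 ^ (n - 1) - 1"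
proof -
  have "johnston_raw n v i \<le> (\<Sum>T\<in>Pow (players n). if critical v T i then 1 else 0)"
    unfolding johnston_raw_eq_sum_share
    by (intro sum_mono share_le_one) (auto intro: finite_subset)
  also have "\<dots> = real (card {T \<in> Pow (players n). critical v T i})"
    by (simp add: sum.If_cases Int_def)
  also have "\<dots> \<le> 2 ^ (n - 1) - 1"
  proof -
    have "card {T \<in> Pow (players n). critical v T i} + 1 \<le> (2::nat) ^ (n - 1)"
      using card_critical_coalitions_lt[OF assms] by simp
    then have "real (card {T \<in> Pow (players n). critical v T i} + 1) \<le> real ((2::nat) ^ (n - 1))"
      by (simp only: of_nat_le_iff)
    then show ?thesis by simp
  qed
  finally show ?thesis .
qed

lemma critical_minimal_winning_iff:
  "minimal_winning v W \<Longrightarrow> critical v W j \<longleftrightarrow> j \<in> W"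
  unfolding minimal_winning_def critical_def by auto

lemma exists_minimal_winning_subset:
  assumes "simple_game n v" "S \<subseteq> players n" "v S = 1"
  shows "\<exists>W \<subseteq> S. minimal_winning v W"
proof -
  have "\<exists>W. (W \<subseteq> S \<and> v W = 1) \<and> (\<forall>Y. Y \<subseteq> S \<and> v Y = 1 \<longrightarrow> card W \<le> card Y)"
    using assms(3) by (intro ex_has_least_nat[of _ S]) simp
  then obtain W where W: "W \<subseteq> S" "v W = 1"
    and least: "\<forall>Y. Y \<subseteq> S \<and> v Y = 1 \<longrightarrow> card W \<le> card Y"
    by blast
  have "finite W" using W(1) assms(2) by (meson finite_players finite_subset subset_trans)
  have "v (W - {j}) = 0" if "j \<in> W" for j
  proof -
    have "card (W - {j}) < card W" using \<open>finite W\<close> that by (rule card_Diff1_less)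
    moreover have "W - {j} \<subseteq> S" using W(1) by blast
    ultimately have "v (W - {j}) \<noteq> 1" using least by (meson not_le)
    then show ?thesis
      using simple_game_binary[OF assms(1), of "W - {j}"] \<open>W - {j} \<subseteq> S\<close> assms(2) by auto
  qed
  then show ?thesis using W unfolding minimal_winning_def by blast
qed

lemma sum_share_others_minimal_winning:
  assumes "simple_game n v" "i \<in> players n" "v {i} = 0"
    and "W \<subseteq> players n" "minimal_winning v W"
  shows "1 / 2 \<le> (\<Sum>j\<in>players n - {i}. share v W j)"
proof -
  have "W \<noteq> {}" "W \<noteq> {i}"
    using assms(3,5) simple_game_empty[OF assms(1)] unfolding minimal_winning_def by auto
  have crit: "{j. critical v W j} = W"
    using critical_minimal_winning_iff[OF assms(5)] by simp
  obtain k where "k \<in> W" using \<open>W \<noteq> {}\<close> by blast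
  then have k: "critical v W k" using crit by blast
  have "{j. critical v W j} \<noteq> {i}" using crit \<open>W \<noteq> {i}\<close> by argo
  then have "share v W i \<le> (\<Sum>j\<in>players n - {i}. share v W j)"
    by (rule share_le_sum_others[OF finite_players assms(4,2)])
  then show ?thesis
    using share_add_sum_others[OF finite_players assms(4,2) k] by linarith
qed

lemma critical_iff_mem_least_winning:
  assumes "simple_game n v" "minimal_winning v W"
    and least: "\<And>S. S \<subseteq> players n \<Longrightarrow> v S = 1 \<Longrightarrow> W \<subseteq> S"
    and "T \<subseteq> players n" "v T = 1"
  shows "critical v T j \<longleftrightarrow> j \<in> W"
proof
  assume "critical v T j"
  then have "\<not> W \<subseteq> T - {j}"
    using simple_game_mono[OF assms(1), of W "T - {j}"] assms(2,4)
    unfolding critical_def minimal_winning_def by auto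
  then show "j \<in> W" using least[OF assms(4,5)] by blast
next
  assume "j \<in> W"
  then have "v (T - {j}) \<noteq> 1" using least[of "T - {j}"] assms(4) by blast
  then show "critical v T j"
    using simple_game_binary[OF assms(1), of "T - {j}"] least[OF assms(4,5)] \<open>j \<in> W\<close> assms(4,5)
    unfolding critical_def by auto
qed

lemma sum_johnston_raw_others_ge_one_if_non_null:
  assumes "simple_game n v" "i \<in> players n" "v {i} = 1"
    and "j \<in> players n - {i}" "\<not> null_player n v j"
  shows "1 \<le> (\<Sum>k\<in>players n - {i}. johnston_raw n v k)"
proof -
  obtain S where S: "S \<subseteq> players n - {j}" "v S \<noteq> v (S \<union> {j})"
    using assms(5) unfolding null_player_def by blast
  have T: "S \<union> {j} \<subseteq> players n" using S(1) assms(4) by auto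
  have "v S = 0 \<or> v S = 1" "v (S \<union> {j}) = 0 \<or> v (S \<union> {j}) = 1"
    using simple_game_binary[OF assms(1)] S(1) T by auto
  moreover have "v S \<le> v (S \<union> {j})" using simple_game_mono[OF assms(1) Un_upper1 T] .
  ultimately have "v S = 0" "v (S \<union> {j}) = 1" using S(2) by auto
  then have "i \<notin> S"
    using simple_game_mono[OF assms(1), of "{i}" S] assms(3) S(1) by auto
  have "S \<union> {j} - {j} = S" using S(1) by auto
  then have crit_j: "critical v (S \<union> {j}) j"
    using \<open>v S = 0\<close> \<open>v (S \<union> {j}) = 1\<close> unfolding critical_def by simp
  have "\<not> critical v (S \<union> {j}) i"
    using \<open>i \<notin> S\<close> assms(4) unfolding critical_def by auto
  then have "1 = (\<Sum>k\<in>players n - {i}. share v (S \<union> {j}) k)"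
    using share_add_sum_others[OF finite_players T assms(2) crit_j]
    by (simp add: share_def)
  also have "\<dots> \<le> (\<Sum>k\<in>players n - {i}. johnston_raw n v k)"
    using sum_johnston_raw_others_ge[OF T] .
  finally show ?thesis .
qed

lemma sum_johnston_raw_others_ge_one_if_two_minimal:
  assumes "simple_game n v" "i \<in> players n" "v {i} = 0"
    and "W\<^sub>1 \<subseteq> players n" "minimal_winning v W\<^sub>1"
    and "W\<^sub>2 \<subseteq> players n" "minimal_winning v W\<^sub>2" "W\<^sub>1 \<noteq> W\<^sub>2"
  shows "1 \<le> (\<Sum>j\<in>players n - {i}. johnston_raw n v j)"
proof -
  let ?others = "\<lambda>T. \<Sum>j\<in>players n - {i}. share v T j"
  have "1 / 2 \<le> ?others W\<^sub>1" "1 / 2 \<le> ?others W\<^sub>2"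
    using sum_share_others_minimal_winning[OF assms(1-3)] assms(4-7) by blast+
  then have "1 \<le> ?others W\<^sub>1 + ?others W\<^sub>2" by linarith
  also have "\<dots> = sum ?others {W\<^sub>1, W\<^sub>2}" using assms(8) by simp
  also have "\<dots> \<le> sum ?others (Pow (players n))"
    using assms(4,6) by (intro sum_mono2) (auto intro: sum_nonneg share_nonneg)
  finally show ?thesis unfolding sum_johnston_raw_others .
qed

lemma johnston_raw_le_others_if_least_winning:
  assumes "simple_game n v" "i \<in> players n" "v {i} = 0"
    and "minimal_winning v W"
    and least: "\<And>S. S \<subseteq> players n \<Longrightarrow> v S = 1 \<Longrightarrow> W \<subseteq> S"
  shows "johnston_raw n v i \<le> (\<Sum>j\<in>players n - {i}. johnston_raw n v j)"
  unfolding johnston_raw_eq_sum_share[of n v i] sum_johnston_raw_others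
proof (rule sum_mono)
  fix T assume T: "T \<in> Pow (players n)"
  have "W \<noteq> {i}" using assms(3,4) unfolding minimal_winning_def by auto
  have "{j. critical v T j} \<noteq> {i}"
  proof (cases "v T = 1")
    case True
    then show ?thesis
      using critical_iff_mem_least_winning[OF assms(1,4) least] T \<open>W \<noteq> {i}\<close> by auto
  qed (auto simp: critical_def)
  then show "share v T i \<le> (\<Sum>j\<in>players n - {i}. share v T j)"
    using T by (intro share_le_sum_others[OF finite_players _ assms(2)]) auto
qed

lemma sum_johnston_raw_others_dichotomy:
  assumes "simple_game n v" "i \<in> players n" "\<not> dictator n v i"
  shows "1 \<le> (\<Sum>j\<in>players n - {i}. johnston_raw n v j)
    \<or> johnston_raw n v i \<le> (\<Sum>j\<in>players n - {i}. johnston_raw n v j)"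
proof (cases "v {i} = 1")
  case True
  then obtain j where "j \<in> players n - {i}" "\<not> null_player n v j"
    using assms(3) unfolding dictator_def by blast
  then show ?thesis
    using sum_johnston_raw_others_ge_one_if_non_null[OF assms(1,2) True] by blast
next
  case False
  then have vi: "v {i} = 0"
    using simple_game_binary[OF assms(1), of "{i}"] assms(2) by auto
  obtain W where W: "W \<subseteq> players n" "minimal_winning v W"
    using exists_minimal_winning_subset[OF assms(1) order_refl simple_game_players[OF assms(1)]]
    by blast
  show ?thesis
  proof (cases "\<forall>S. S \<subseteq> players n \<longrightarrow> v S = 1 \<longrightarrow> W \<subseteq> S")
    case True
    then show ?thesis
      using johnston_raw_le_others_if_least_winning[OF assms(1,2) vi W(2)] by blast
  next
    case False
    then obtain S where S: "S \<subseteq> players n" "v S = 1" "\<not> W \<subseteq> S" by blast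
    then obtain W' where "W' \<subseteq> S" "minimal_winning v W'"
      using exists_minimal_winning_subset[OF assms(1)] by blast
    then show ?thesis
      using sum_johnston_raw_others_ge_one_if_two_minimal[OF assms(1,2) vi W, of W'] S by auto
  qed
qed

lemma johnston_raw_nonneg: "0 \<le> johnston_raw n v j"
  unfolding johnston_raw_eq_sum_share by (intro sum_nonneg share_nonneg)

lemma johnston_raw_le_mult_others:
  assumes "n \<ge> 2" "simple_game n v" "i \<in> players n" "\<not> dictator n v i"
  shows "johnston_raw n v i \<le> (2 ^ (n - 1) - 1) * (\<Sum>j\<in>players n - {i}. johnston_raw n v j)"
    (is "?\<psi> \<le> (?M - 1) * ?R")
proof -
  have "2 \<le> ?M" using power_increasing[of 1 "n - 1" "2::real"] assms(1) by simp
  have "0 \<le> ?R" by (intro sum_nonneg johnston_raw_nonneg)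
  show ?thesis
    using sum_johnston_raw_others_dichotomy[OF assms(2-4)]
  proof
    assume "1 \<le> ?R"
    have "?\<psi> \<le> ?M - 1" using johnston_raw_le_of_not_dictator[OF assms(3,4)] .
    also have "\<dots> \<le> (?M - 1) * ?R"
      using mult_left_mono[OF \<open>1 \<le> ?R\<close>, of "?M - 1"] \<open>2 \<le> ?M\<close> by simp
    finally show ?thesis .
  next
    assume "?\<psi> \<le> ?R"
    also have "?R \<le> (?M - 1) * ?R"
      using mult_right_mono[of 1 "?M - 1" ?R] \<open>2 \<le> ?M\<close> \<open>0 \<le> ?R\<close> by simp
    finally show ?thesis .
  qed
qed

lemma johnston_eq_divide:
  assumes "i \<in> players n"
  shows "johnston n v i = johnston_raw n v i
    / (johnston_raw n v i + (\<Sum>j\<in>players n - {i}. johnston_raw n v j))"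
  unfolding johnston_def using sum.remove[OF finite_players assms, of "johnston_raw n v"] by simp

lemma divide_add_le_of_le_mult:
  fixes a r c :: real
  assumes "0 \<le> a" "0 \<le> r" "1 \<le> c" "a \<le> (c - 1) * r"
  shows "a / (a + r) \<le> (c - 1) / c"
proof (cases "a + r = 0")
  case False
  then have "0 < a + r" using assms(1,2) by linarith
  then show ?thesis using assms(3,4) by (simp add: field_simps)
qed (use assms(3) in simp)

theorem theorem3:
  fixes n :: nat and v :: "nat set \<Rightarrow> nat" and i :: nat
  assumes "n \<ge> 2"
    and "simple_game n v"
    and "i \<in> players n"
    and "\<not> dictator n v i"
  shows "johnston n v i \<le> (2 ^ (n - 1) - 1) / 2 ^ (n - 1)"
  unfolding johnston_eq_divide[OF assms(3)]
  by (rule divide_add_le_of_le_mult[OF johnston_raw_nonneg sum_nonneg[OF johnston_raw_nonneg]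
        _ johnston_raw_le_mult_others[OF assms]]) simp

end
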